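(* Let $r$ be a positive integer and let $n\in F_r$. Then $\displaystyle R(n)<\frac{J_r}{r}\,Q_1(n)\,(Q_1(n)-r)$.
   Context: For a positive integer $r$, $S_r$ is the multiplicative arithmetic function with $S_r(p^{\alpha})=0$ if $p\leq r$ and $S_r(p^{\alpha})=p^{\alpha-1}(p-r)$ if $p>r$, for all primes $p$ and positive integers $\alpha$. $B_r=\{n\in\mathbb{N}: S_r(n)>0\}$ (positive integers whose smallest prime factor exceeds $r$, together with $1$). $F_r$ is the set of $n\in B_r$ such that $S_r(n)<S_r(m)$ for all $m\in B_r$ with $m>n$. $R(n)=n\prod_{p\text{ prime},\,p\mid n}p^{-1}$. $Q_1(n)$ is the smallest prime that is larger than $r$ and does not divide $n$. $r\#$ is the product of all primes $\leq r$ (with $1\#=1$). The Jacobsthal function $J(m)$ is the smallest positive integer $a$ such that every set of $a$ consecutive integers contains an element coprime to $m$; $J_r=J(r\#)$. *)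

theory Defs
  imports "HOL-Computational_Algebra.Primes" Complex_Main
begin

definition S :: "nat \<Rightarrow> nat \<Rightarrow> int" where
  "S r n = (\<Prod>p\<in>prime_factors n.
      (if p \<le> r then 0 else int p ^ (multiplicity p n - 1) * (int p - int r)))"

definition B :: "nat \<Rightarrow> nat set" where
  "B r = {n. n > 0 \<and> S r n > 0}"

definition F :: "nat \<Rightarrow> nat set" where
  "F r = {n \<in> B r. \<forall>m \<in> B r. m > n \<longrightarrow> S r n < S r m}"

definition R :: "nat \<Rightarrow> nat" where
  "R n = n div (\<Prod>p\<in>prime_factors n. p)"

definition Q1 :: "nat \<Rightarrow> nat \<Rightarrow> nat" where
  "Q1 r n = (LEAST p. prime p \<and> p > r \<and> \<not> p dvd n)"

definition primorial :: "nat \<Rightarrow> nat" where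
  "primorial r = (\<Prod>p\<in>{p. prime p \<and> p \<le> r}. p)"

definition jacobsthal :: "nat \<Rightarrow> nat" where
  "jacobsthal m = (LEAST a. a > 0 \<and>
      (\<forall>x::int. \<exists>k\<in>{x..<x + int a}. coprime k (int m)))"

definition J :: "nat \<Rightarrow> nat" where
  "J r = jacobsthal (primorial r)"

end

theory Submission
  imports Defs
begin

text \<open>
  Suppose \<open>R(n) \<ge> (J\<^sub>r/r) q (q - r)\<close> with \<open>q = Q\<^sub>1(n)\<close>.  Then the interval
  \<open>(R(n)/q, R(n)/(q - r)]\<close> has length at least \<open>J\<^sub>r\<close>, so it contains an integer \<open>k\<close>
  coprime to \<open>r#\<close>.  Writing \<open>S\<^sub>r(m) = m \<Prod>\<^sub>p\<^sub>|\<^sub>m (1 - r/p)\<close>, the number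
  \<open>m = k rad(n) q > n\<close> lies in \<open>B\<^sub>r\<close>, and since its prime factors contain those of \<open>n\<close>
  together with \<open>q\<close>, we get \<open>S\<^sub>r(m) \<le> k (q - r) rad(n) \<Prod>\<^sub>p\<^sub>|\<^sub>n (1 - r/p) \<le> S\<^sub>r(n)\<close>,
  contradicting \<open>n \<in> F\<^sub>r\<close>.
\<close>

definition rad :: "nat \<Rightarrow> nat" where
  "rad n = (\<Prod>p\<in>prime_factors n. p)"

definition sieve_density :: "nat \<Rightarrow> nat \<Rightarrow> real" where
  "sieve_density r m = (\<Prod>p\<in>prime_factors m. 1 - real r / real p)"

lemma rad_pos: "rad n > 0"
  unfolding rad_def by (rule prod_pos) (meson in_prime_factors_imp_prime prime_gt_0_nat)

lemma rad_dvd: "rad n dvd n"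
proof (cases "n = 0")
  case False
  have "rad n dvd (\<Prod>p\<in>prime_factors n. p ^ multiplicity p n)"
    unfolding rad_def by (rule prod_dvd_prod) (auto simp: prime_factors_multiplicity)
  also have "\<dots> = n" using prod_prime_factors[of n] False by simp
  finally show ?thesis .
qed simp

lemma R_mult_rad: "R n * rad n = n"
  using rad_dvd[of n] unfolding R_def rad_def[symmetric] by simp

lemma prime_factors_rad: "prime_factors (rad n) = prime_factors n"
proof (intro set_eqI iffI)
  fix p assume "p \<in> prime_factors (rad n)"
  then show "p \<in> prime_factors n"
    using rad_dvd[of n] rad_pos[of n]
    by (cases "n = 0") (auto simp: in_prime_factors_iff rad_def[of 0] intro: dvd_trans)
next
  fix p assume p: "p \<in> prime_factors n"
  then have "p dvd rad n" unfolding rad_def by (intro dvd_prodI) auto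
  then show "p \<in> prime_factors (rad n)" using p rad_pos[of n] by (auto simp: in_prime_factors_iff)
qed

lemma prime_factors_mult_rad_prime:
  assumes "k > 0" "prime q"
  shows "prime_factors (k * rad n * q) = prime_factors k \<union> prime_factors n \<union> {q}"
  using assms rad_pos[of n]
  by (simp add: prime_factors_product prime_prime_factors prime_factors_rad)

lemma S_pos_iff:
  assumes "m > 0"
  shows "S r m > 0 \<longleftrightarrow> (\<forall>p\<in>prime_factors m. r < p)"
proof
  assume pos: "S r m > 0"
  show "\<forall>p\<in>prime_factors m. r < p"
  proof (rule ccontr)
    assume "\<not> (\<forall>p\<in>prime_factors m. r < p)"
    then obtain p where "p \<in> prime_factors m" "p \<le> r" by auto
    then have "S r m = 0" unfolding S_def by (intro prod_zero) auto
    with pos show False by simp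
  qed
next
  assume "\<forall>p\<in>prime_factors m. r < p"
  then show "S r m > 0" unfolding S_def
    by (intro prod_pos) (auto intro!: mult_pos_pos zero_less_power)
qed

lemma in_B_iff: "m \<in> B r \<longleftrightarrow> m > 0 \<and> (\<forall>p\<in>prime_factors m. r < p)"
  unfolding B_def using S_pos_iff by auto

lemma of_int_S_eq:
  assumes "m > 0" "\<forall>p\<in>prime_factors m. r < p"
  shows "real_of_int (S r m) = real m * sieve_density r m"
proof -
  have "real_of_int (S r m)
      = (\<Prod>p\<in>prime_factors m. real p ^ multiplicity p m * (1 - real r / real p))"
    unfolding S_def of_int_prod
  proof (rule prod.cong[OF refl])
    fix p assume p: "p \<in> prime_factors m"
    then have "r < p" "prime p" "multiplicity p m > 0"
      using assms by (auto simp: prime_factors_multiplicity)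
    moreover from this have "real p ^ multiplicity p m = real p ^ (multiplicity p m - 1) * real p"
      by (metis Suc_diff_1 power_Suc2)
    ultimately show "real_of_int (if p \<le> r then 0 else int p ^ (multiplicity p m - 1) * (int p - int r))
        = real p ^ multiplicity p m * (1 - real r / real p)"
      by (simp add: field_simps prime_gt_0_nat)
  qed
  also have "\<dots> = real (\<Prod>p\<in>prime_factors m. p ^ multiplicity p m) * sieve_density r m"
    unfolding sieve_density_def prod.distrib by simp
  also have "(\<Prod>p\<in>prime_factors m. p ^ multiplicity p m) = m"
    using prod_prime_factors[of m] assms(1) by simp
  finally show ?thesis .
qed

lemma prod_superset_le:
  fixes f :: "'a \<Rightarrow> 'b :: linordered_idom"
  assumes "finite A" "C \<subseteq> A" "\<And>x. x \<in> A \<Longrightarrow> 0 \<le> f x \<and> f x \<le> 1"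
  shows "prod f A \<le> prod f C"
proof -
  have "prod f A = prod f (A - C) * prod f C"
    using prod.subset_diff[OF assms(2,1)] by simp
  also have "\<dots> \<le> 1 * prod f C"
    using assms by (intro mult_right_mono prod_le_1 prod_nonneg) auto
  finally show ?thesis by simp
qed

lemma sieve_density_antimono:
  assumes "prime_factors a \<subseteq> prime_factors b" "\<forall>p\<in>prime_factors b. r < p"
  shows "sieve_density r b \<le> sieve_density r a"
  unfolding sieve_density_def
proof (rule prod_superset_le)
  fix p assume "p \<in> prime_factors b"
  then have "r < p" using assms(2) by blast
  then show "0 \<le> 1 - real r / real p \<and> 1 - real r / real p \<le> 1"
    by (simp add: divide_le_eq_1)
qed (use assms in auto)

lemma S_mult_rad_prime_le:
  assumes n: "n > 0" "\<forall>p\<in>prime_factors n. r < p"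
    and k: "k > 0" "\<forall>p\<in>prime_factors k. r < p"
    and q: "prime q" "r < q" "\<not> q dvd n"
    and small: "k * (q - r) \<le> R n"
  shows "S r (k * rad n * q) \<le> S r n"
proof -
  let ?m = "k * rad n * q"
  have pf: "prime_factors ?m = prime_factors k \<union> prime_factors n \<union> {q}"
    using prime_factors_mult_rad_prime k q by blast
  have m: "?m > 0" "\<forall>p\<in>prime_factors ?m. r < p"
    using pf n k q rad_pos[of n] by (auto simp: prime_gt_0_nat)
  have "q \<notin> prime_factors n" using q by auto
  then have "sieve_density r (n * q) = sieve_density r n * (1 - real r / real q)"
    using n q by (simp add: sieve_density_def prime_factors_product prime_prime_factors mult.commute)
  moreover have "sieve_density r ?m \<le> sieve_density r (n * q)"
    using m n q pf by (intro sieve_density_antimono)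
      (auto simp: prime_factors_product prime_prime_factors)
  moreover have "sieve_density r n \<ge> 0"
    using n unfolding sieve_density_def by (intro prod_nonneg) (auto simp: divide_le_eq_1)
  moreover have "real k * (real q - real r) \<le> real (R n)"
    using small q by (metis of_nat_diff of_nat_le_iff of_nat_mult less_imp_le)
  moreover have "real q * (1 - real r / real q) = real q - real r"
    using q by (simp add: right_diff_distrib prime_gt_0_nat)
  ultimately have "real ?m * sieve_density r ?m \<le> real ?m * (sieve_density r n * (1 - real r / real q))"
    by (intro mult_left_mono) auto
  also have "\<dots> = real k * (real q * (1 - real r / real q)) * real (rad n) * sieve_density r n"
    by (simp add: ac_simps)
  also have "\<dots> = real k * (real q - real r) * real (rad n) * sieve_density r n"
    using \<open>real q * (1 - real r / real q) = real q - real r\<close> by simp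
  also have "\<dots> \<le> real (R n) * real (rad n) * sieve_density r n"
    using \<open>real k * (real q - real r) \<le> real (R n)\<close> \<open>sieve_density r n \<ge> 0\<close>
    by (intro mult_right_mono) auto
  finally have "real ?m * sieve_density r ?m \<le> real (R n) * real (rad n) * sieve_density r n" .
  moreover have "real n = real (R n) * real (rad n)"
    by (metis R_mult_rad of_nat_mult)
  ultimately have "real_of_int (S r ?m) \<le> real_of_int (S r n)"
    using of_int_S_eq[OF m] of_int_S_eq[OF n] by simp
  then show ?thesis by simp
qed

lemma Q1_spec:
  assumes "n > 0"
  shows "prime (Q1 r n) \<and> r < Q1 r n \<and> \<not> Q1 r n dvd n"
proof -
  obtain p :: nat where "prime p" "r + n < p" using bigger_prime by blast
  then have "prime p \<and> r < p \<and> \<not> p dvd n" using assms by (auto dest: dvd_imp_le)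
  then show ?thesis unfolding Q1_def by (rule LeastI)
qed

lemma primorial_pos: "primorial r > 0"
  unfolding primorial_def by (rule prod_pos) (auto simp: prime_gt_0_nat)

lemma prime_factor_gt_if_coprime_primorial:
  assumes "coprime k (primorial r)" "p \<in> prime_factors k"
  shows "r < p"
proof (rule ccontr)
  assume "\<not> r < p"
  with assms(2) have "p dvd primorial r" "p dvd k" "prime p"
    unfolding primorial_def by auto
  with assms(1) show False
    using coprime_common_divisor not_prime_unit by blast
qed

lemma jacobsthal_window:
  assumes "M > 0"
  shows "\<exists>k\<in>{x..<x + int (jacobsthal M)}. coprime k (int M)"
proof -
  have "\<exists>k\<in>{x..<x + int M}. coprime k (int M)" for x :: int
  proof
    let ?k = "x + (1 - x) mod int M"
    show "?k \<in> {x..<x + int M}" using assms by auto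
    have "?k mod int M = 1 mod int M" by (simp add: mod_add_right_eq)
    then show "coprime ?k (int M)"
      by (metis coprime_1_left coprime_mod_left_iff assms of_nat_0_less_iff less_irrefl)
  qed
  with assms have "M > 0 \<and> (\<forall>x::int. \<exists>k\<in>{x..<x + int M}. coprime k (int M))"
    by blast
  then have "jacobsthal M > 0 \<and> (\<forall>x::int. \<exists>k\<in>{x..<x + int (jacobsthal M)}. coprime k (int M))"
    unfolding jacobsthal_def by (rule LeastI)
  then show ?thesis by blast
qed

lemma jacobsthal_coprime_between:
  fixes a :: real
  assumes "M > 0"
  shows "\<exists>k::int. a < k \<and> k \<le> a + real (jacobsthal M) \<and> coprime k (int M)"
proof -
  obtain k where k: "k \<in> {\<lfloor>a\<rfloor> + 1..<\<lfloor>a\<rfloor> + 1 + int (jacobsthal M)}" "coprime k (int M)"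
    using jacobsthal_window[OF assms] by blast
  then have "\<lfloor>a\<rfloor> + 1 \<le> k" "k \<le> \<lfloor>a\<rfloor> + int (jacobsthal M)" by auto
  then have "real_of_int \<lfloor>a\<rfloor> + 1 \<le> k" "k \<le> real_of_int \<lfloor>a\<rfloor> + real (jacobsthal M)"
    by linarith+
  moreover have "real_of_int \<lfloor>a\<rfloor> \<le> a" "a < real_of_int \<lfloor>a\<rfloor> + 1" by linarith+
  ultimately have "a < k" "k \<le> a + real (jacobsthal M)" by linarith+
  with k(2) show ?thesis by blast
qed

lemma coprime_primorial_multiplier_exists:
  fixes N q r :: nat
  assumes "0 < r" "r < q" "real (J r) / real r * real q * (real q - real r) \<le> real N"
  shows "\<exists>k>0. (\<forall>p\<in>prime_factors k. r < p) \<and> N < k * q \<and> k * (q - r) \<le> N"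
proof -
  have "real (J r) * real q * (real q - real r) \<le> real N * real r"
    using assms by (simp add: field_simps)
  then have gap: "real N / q + real (J r) \<le> real N / (real q - real r)"
    using assms by (simp add: field_simps)
  obtain k :: int where k: "real N / q < k" "k \<le> real N / q + real (J r)"
    "coprime k (int (primorial r))"
    using jacobsthal_coprime_between[OF primorial_pos] unfolding J_def by blast
  have "0 \<le> real N / q" by simp
  then obtain kn where kn: "k = int kn" "kn > 0"
    using k(1) by (metis of_int_0 of_int_less_iff order.strict_trans1 pos_int_cases)
  have "\<forall>p\<in>prime_factors kn. r < p"
    using k(3) kn(1) prime_factor_gt_if_coprime_primorial by auto
  moreover have "N < kn * q"
    using k(1) assms(2) kn(1) by (simp add: divide_less_eq flip: of_nat_mult)
  moreover have "real kn \<le> real N / (real q - real r)"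
    using k(2) gap kn(1) by simp
  then have "real (kn * (q - r)) \<le> real N"
    using assms(2) by (simp add: le_divide_eq)
  then have "kn * (q - r) \<le> N" by linarith
  ultimately show ?thesis using kn(2) by blast
qed

theorem lemma3p5:
  fixes r n :: nat
  assumes "r > 0" and "n \<in> F r"
  shows "real (R n) < real (J r) / real r * real (Q1 r n) * (real (Q1 r n) - real r)"
proof (rule ccontr)
  assume R_large: "\<not> ?thesis"
  from assms(2) have maximal: "\<forall>m\<in>B r. n < m \<longrightarrow> S r n < S r m"
    and n: "n > 0" "\<forall>p\<in>prime_factors n. r < p"
    unfolding F_def in_B_iff by auto
  define q where "q = Q1 r n"
  have q: "prime q" "r < q" "\<not> q dvd n" using Q1_spec[OF n(1)] unfolding q_def by auto
  obtain k where k: "k > 0" "\<forall>p\<in>prime_factors k. r < p" and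
    large: "R n < k * q" and small: "k * (q - r) \<le> R n"
    using coprime_primorial_multiplier_exists[of r q "R n"] assms(1) q(2) R_large
    unfolding q_def by force
  have "R n * rad n < k * q * rad n" using large rad_pos[of n] by simp
  then have "n < k * rad n * q" by (simp add: R_mult_rad ac_simps)
  moreover have "k * rad n * q \<in> B r"
    using prime_factors_mult_rad_prime[OF k(1) q(1)] k n q rad_pos[of n]
    by (auto simp: in_B_iff prime_gt_0_nat)
  ultimately have "S r n < S r (k * rad n * q)" using maximal by blast
  moreover have "S r (k * rad n * q) \<le> S r n"
    using S_mult_rad_prime_le[OF n k q small] .
  ultimately show False by simp
qed

end
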